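(* Let $X_1,\dots,X_m$ be jointly distributed random variables, each taking values in $\{0,1\}^t$, that have $(T,\varepsilon_1)$ conditional pseudo-min-entropy $\alpha$. Let $H$ be an extractor family $\{0,1\}^t\times\{0,1\}^r\to\{0,1\}^\ell$ for min-entropy $\alpha$ with error $\varepsilon_2$, such that every function in the support of $H$ is computable by a circuit of size $T_0$. Let $R_1,\dots,R_m$ be independent uniform elements of $\{0,1\}^r$, independent of $X_1,\dots,X_m$. Then with probability at least $1/2$ over the choice of a function $h\sim H$, the distribution $(h(X_1,R_1),\dots,h(X_m,R_m))$ is $(T-mT_0,\ m\varepsilon_1+2m^2\varepsilon_2)$-pseudorandom.
   Context: A sequence $X_1,\dots,X_m$ of jointly distributed random variables on $\{0,1\}^t$ has $(s,\varepsilon)$ conditional pseudo-min-entropy $\alpha$ if for every $1\le i\le m$ there is a random variable $Y_i$ jointly distributed with $X_1,\dots,X_{i-1}$ such that (i) for every possible value of $(X_1,\dots,X_{i-1})$, the min-entropy of $Y_i$ conditioned on that value is at least $\alpha$, and (ii) for every circuit $D$ of size at most $s$, $|\Pr[D(X_1,\dots,X_{i-1},X_i)=1]-\Pr[D(X_1,\dots,X_{i-1},Y_i)=1]|\le\varepsilon$. An extractor family for min-entropy $\alpha$ with error $\varepsilon$ is a distribution $H$ on functions $\{0,1\}^t\times\{0,1\}^r\to\{0,1\}^\ell$ such that for every random variable $X$ on $\{0,1\}^t$ of min-entropy at least $\alpha$, $(H,H(X,U_r))$ and $(H,U_\ell)$ are within statistical distance $\varepsilon$ (with $H,X,U_r$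 independent, $U_r,U_\ell$ uniform). A random variable $Z$ on $\{0,1\}^N$ is $(s,\varepsilon)$-pseudorandom if for every circuit $D$ of size at most $s$, $|\Pr[D(Z)=1]-\Pr[D(U_N)=1]|\le\varepsilon$ with $U_N$ uniform. Circuits are nonuniform. *)

theory Defs
  imports "HOL-Probability.Probability"
begin

definition bitstrings :: "nat \<Rightarrow> bool list set" where
  "bitstrings n = {z. length z = n}"

definition uniform_bits :: "nat \<Rightarrow> bool list pmf" where
  "uniform_bits n = pmf_of_set (bitstrings n)"

text \<open>A circuit is a list of gates (each gate may only read inputs, constants and
  earlier gates) together with a list of output wires.\<close>

datatype wire = Inp nat | Gt nat | Cst bool

datatype gate = AndG wire wire | OrG wire wire | NotG wire

type_synonym circuit = "gate list \<times> wire list"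

fun wire_val :: "bool list \<Rightarrow> bool list \<Rightarrow> wire \<Rightarrow> bool" where
  "wire_val inp vals (Inp k) = (if k < length inp then inp ! k else False)"
| "wire_val inp vals (Gt j) = (if j < length vals then vals ! j else False)"
| "wire_val inp vals (Cst b) = b"

fun gate_val :: "bool list \<Rightarrow> bool list \<Rightarrow> gate \<Rightarrow> bool" where
  "gate_val inp vals (AndG a b) = (wire_val inp vals a \<and> wire_val inp vals b)"
| "gate_val inp vals (OrG a b) = (wire_val inp vals a \<or> wire_val inp vals b)"
| "gate_val inp vals (NotG a) = (\<not> wire_val inp vals a)"

definition eval_gates :: "bool list \<Rightarrow> gate list \<Rightarrow> bool list" where
  "eval_gates inp gs = foldl (\<lambda>vals g. vals @ [gate_val inp vals g]) [] gs"

definition circ_eval :: "circuit \<Rightarrow> bool list \<Rightarrow> bool list" where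
  "circ_eval C inp = map (wire_val inp (eval_gates inp (fst C))) (snd C)"

definition circ_size :: "circuit \<Rightarrow> nat" where
  "circ_size C = length (fst C)"

definition distinguisher :: "circuit \<Rightarrow> bool" where
  "distinguisher D \<longleftrightarrow> length (snd D) = 1"

definition accepts :: "circuit \<Rightarrow> bool list \<Rightarrow> bool" where
  "accepts D z \<longleftrightarrow> hd (circ_eval D z)"

text \<open>Circuit size bounds are integers, so that a negative bound (e.g. T - m T0 < 0)
  admits no circuits.\<close>

definition small_distinguisher :: "int \<Rightarrow> circuit \<Rightarrow> bool" where
  "small_distinguisher s D \<longleftrightarrow> distinguisher D \<and> int (circ_size D) \<le> s"

definition pseudorandom :: "int \<Rightarrow> real \<Rightarrow> nat \<Rightarrow> bool list pmf \<Rightarrow> bool" where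
  "pseudorandom s \<epsilon> N Z \<longleftrightarrow>
     (\<forall>D. small_distinguisher s D \<longrightarrow>
        \<bar>measure_pmf.prob Z {z. accepts D z} - measure_pmf.prob (uniform_bits N) {z. accepts D z}\<bar> \<le> \<epsilon>)"

definition has_min_entropy :: "real \<Rightarrow> bool list pmf \<Rightarrow> bool" where
  "has_min_entropy \<alpha> X \<longleftrightarrow> (\<forall>x. pmf X x \<le> 2 powr (- \<alpha>))"

definition cond_min_entropy_ge :: "real \<Rightarrow> ('a \<times> bool list) pmf \<Rightarrow> bool" where
  "cond_min_entropy_ge \<alpha> P \<longleftrightarrow>
     (\<forall>v \<in> set_pmf (map_pmf fst P). \<forall>y. pmf P (v, y) \<le> 2 powr (- \<alpha>) * pmf (map_pmf fst P) v)"

text \<open>The sequence X_1..X_m is given as one joint distribution Xs on lists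
  (length m) of bit strings (length t). Index i (1-based in the paper) is
  list position i-1, so the prefix X_1..X_{i-1} is take (i-1), and X_i is position i-1.
  A circuit reads the tuple as the concatenation of its components.\<close>

definition joint_bits :: "nat \<Rightarrow> nat \<Rightarrow> bool list list pmf \<Rightarrow> bool" where
  "joint_bits m t Xs \<longleftrightarrow> (\<forall>xs \<in> set_pmf Xs. length xs = m \<and> (\<forall>x \<in> set xs. length x = t))"

definition cond_pseudo_min_entropy ::
  "nat \<Rightarrow> nat \<Rightarrow> bool list list pmf \<Rightarrow> int \<Rightarrow> real \<Rightarrow> real \<Rightarrow> bool" where
  "cond_pseudo_min_entropy m t Xs s \<epsilon> \<alpha> \<longleftrightarrow>
     (\<forall>i < m. \<exists>Y :: (bool list list \<times> bool list) pmf.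
        map_pmf fst Y = map_pmf (take i) Xs \<and>
        (\<forall>p \<in> set_pmf Y. length (snd p) = t) \<and>
        cond_min_entropy_ge \<alpha> Y \<and>
        (\<forall>D. small_distinguisher s D \<longrightarrow>
           \<bar>measure_pmf.prob Xs {xs. accepts D (concat (take i xs) @ xs ! i)}
            - measure_pmf.prob Y {p. accepts D (concat (fst p) @ snd p)}\<bar> \<le> \<epsilon>))"

definition within_sd :: "real \<Rightarrow> 'a pmf \<Rightarrow> 'a pmf \<Rightarrow> bool" where
  "within_sd \<epsilon> P Q \<longleftrightarrow> (\<forall>A. \<bar>measure_pmf.prob P A - measure_pmf.prob Q A\<bar> \<le> \<epsilon>)"

definition extractor_family ::
  "nat \<Rightarrow> nat \<Rightarrow> nat \<Rightarrow> real \<Rightarrow> real \<Rightarrow>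
   (bool list \<Rightarrow> bool list \<Rightarrow> bool list) pmf \<Rightarrow> bool" where
  "extractor_family t r l \<alpha> \<epsilon> H \<longleftrightarrow>
     (\<forall>h \<in> set_pmf H. \<forall>x \<rho>. length x = t \<longrightarrow> length \<rho> = r \<longrightarrow> length (h x \<rho>) = l) \<and>
     (\<forall>X. set_pmf X \<subseteq> bitstrings t \<longrightarrow> has_min_entropy \<alpha> X \<longrightarrow>
        within_sd \<epsilon>
          (map_pmf (\<lambda>(h, x, \<rho>). (h, h x \<rho>)) (pair_pmf H (pair_pmf X (uniform_bits r))))
          (pair_pmf H (uniform_bits l)))"

definition computes :: "circuit \<Rightarrow> nat \<Rightarrow> nat \<Rightarrow> (bool list \<Rightarrow> bool list \<Rightarrow> bool list) \<Rightarrow> bool" where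
  "computes C t r h \<longleftrightarrow>
     (\<forall>x \<rho>. length x = t \<longrightarrow> length \<rho> = r \<longrightarrow> circ_eval C (x @ \<rho>) = h x \<rho>)"

definition uniform_seeds :: "nat \<Rightarrow> nat \<Rightarrow> bool list list pmf" where
  "uniform_seeds m r = pmf_of_set {rs. length rs = m \<and> (\<forall>\<rho> \<in> set rs. length \<rho> = r)}"

definition extracted :: "(bool list \<Rightarrow> bool list \<Rightarrow> bool list) \<Rightarrow> bool list list pmf \<Rightarrow> nat \<Rightarrow> nat \<Rightarrow> bool list pmf" where
  "extracted h Xs m r = map_pmf (\<lambda>(xs, rs). concat (map2 h xs rs)) (pair_pmf Xs (uniform_seeds m r))"

end

theory Submission
  imports Defs
begin

text \<open>Fix h in the support of H and a distinguisher D of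
  size T - m T0.  Hybrid j extracts the first j blocks and leaves the rest uniform, so
  hybrid 0 is uniform and hybrid m is the extracted distribution.  Going from hybrid j to
  hybrid j + 1 costs (a) eps1, by replacing X_(j+1) with the substitute Y_(j+1) of
  conditional min-entropy alpha -- the needed distinguisher hard-wires the seeds and the
  uniform suffix and runs at most m copies of the extractor circuit -- plus (b) the
  statistical distance between (X_1..X_j, h(Y, R)) and (X_1..X_j, U_l).  Averaged over h,
  (b) is at most eps2 by the extractor property applied to each conditional distribution
  of Y.  Summing, D's advantage is at most m eps1 + Delta(h) with E[Delta] <= m eps2, and
  Markov's inequality gives Delta(h) <= 2 m eps2 <= 2 m^2 eps2 with probability 1/2.\<close>

section \<open>Composing circuits\<close>

text \<open>To turn a distinguisher D for the extracted output into a distinguisher for the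
  source blocks, D is fed the outputs of copies of the extractor circuit, each run on one
  input block and a hard-wired seed.  A wire is below n if it only refers to gates with
  index below n; such a wire keeps its value when further gates are appended.\<close>
fun wire_below :: "nat \<Rightarrow> wire \<Rightarrow> bool" where
  "wire_below n (Gt g) = (g < n)"
| "wire_below n (Inp i) = True"
| "wire_below n (Cst b) = True"

lemma wire_below_mono: "wire_below n w \<Longrightarrow> n \<le> n' \<Longrightarrow> wire_below n' w"
  by (cases w) auto

lemma wire_val_append:
  "wire_below (length vals) w \<Longrightarrow> wire_val inp (vals @ vs) w = wire_val inp vals w"
  by (cases w) (auto simp: nth_append)

lemma wire_val_below_0: "wire_below 0 w \<Longrightarrow> wire_val inp vals w = wire_val inp [] w"
  by (cases w) auto

lemma eval_gates_Nil [simp]: "eval_gates inp [] = []"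
  by (simp add: eval_gates_def)

lemma eval_gates_snoc:
  "eval_gates inp (gs @ [g]) = eval_gates inp gs @ [gate_val inp (eval_gates inp gs) g]"
  by (simp add: eval_gates_def)

lemma length_eval_gates [simp]: "length (eval_gates inp gs) = length gs"
  by (induction gs rule: rev_induct) (simp_all add: eval_gates_snoc)

lemma eval_gates_append_prefix: "\<exists>ext. eval_gates inp (G @ gs) = eval_gates inp G @ ext"
proof (induction gs rule: rev_induct)
  case (snoc g gs)
  then show ?case by (metis append.assoc eval_gates_snoc)
qed simp

lemma wire_val_prefix:
  assumes "wire_below (length G) w"
  shows "wire_val inp (eval_gates inp (G @ gs)) w = wire_val inp (eval_gates inp G) w"
  using eval_gates_append_prefix[of inp G gs] assms wire_val_append by fastforce

text \<open>Relocating a circuit behind n existing gates: input i becomes the wire ins!i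
  and gate g becomes gate n + g (k is the number of gates of the relocated circuit).\<close>
fun relabel_wire :: "nat \<Rightarrow> nat \<Rightarrow> wire list \<Rightarrow> wire \<Rightarrow> wire" where
  "relabel_wire n k ins (Inp i) = (if i < length ins then ins ! i else Cst False)"
| "relabel_wire n k ins (Gt g) = (if g < k then Gt (n + g) else Cst False)"
| "relabel_wire n k ins (Cst b) = Cst b"

fun relabel_gate :: "nat \<Rightarrow> nat \<Rightarrow> wire list \<Rightarrow> gate \<Rightarrow> gate" where
  "relabel_gate n k ins (AndG a b) = AndG (relabel_wire n k ins a) (relabel_wire n k ins b)"
| "relabel_gate n k ins (OrG a b) = OrG (relabel_wire n k ins a) (relabel_wire n k ins b)"
| "relabel_gate n k ins (NotG a) = NotG (relabel_wire n k ins a)"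

lemma relabel_wire_val:
  assumes "length vals0 = n" "length vs \<le> k" "\<forall>w\<in>set ins. wire_below n w"
  shows "wire_val inp (vals0 @ vs) (relabel_wire n k ins w)
           = wire_val (map (wire_val inp vals0) ins) vs w"
  using assms by (cases w) (auto simp: nth_append wire_val_append)

lemma relabel_gate_val:
  assumes "length vals0 = n" "length vs \<le> k" "\<forall>w\<in>set ins. wire_below n w"
  shows "gate_val inp (vals0 @ vs) (relabel_gate n k ins g)
           = gate_val (map (wire_val inp vals0) ins) vs g"
  using assms by (cases g) (auto simp: relabel_wire_val)

lemma relabel_wire_below:
  "\<forall>w\<in>set ins. wire_below n w \<Longrightarrow> wire_below (n + k) (relabel_wire n k ins w)"
  by (cases w) (auto, meson nth_mem le_add1 wire_below_mono)

lemma eval_gates_relabel: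
  assumes "length G = n" "length gs \<le> k" "\<forall>w\<in>set ins. wire_below n w"
  shows "eval_gates inp (G @ map (relabel_gate n k ins) gs)
           = eval_gates inp G @ eval_gates (map (wire_val inp (eval_gates inp G)) ins) gs"
  using assms
proof (induction gs rule: rev_induct)
  case (snoc g gs)
  then show ?case
    by (simp add: eval_gates_snoc[of _ "G @ map (relabel_gate n k ins) gs", simplified]
        eval_gates_snoc relabel_gate_val)
qed simp

definition attach :: "gate list \<Rightarrow> circuit \<Rightarrow> wire list \<Rightarrow> circuit" where
  "attach G C ins =
     (G @ map (relabel_gate (length G) (circ_size C) ins) (fst C),
      map (relabel_wire (length G) (circ_size C) ins) (snd C))"

lemma attach_prefix: "\<exists>gs. fst (attach G C ins) = G @ gs"
  by (simp add: attach_def)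

lemma attach_size: "length (fst (attach G C ins)) = length G + circ_size C"
  by (simp add: attach_def circ_size_def)

lemma attach_outputs_below:
  "\<forall>w\<in>set ins. wire_below (length G) w \<Longrightarrow>
     \<forall>w\<in>set (snd (attach G C ins)). wire_below (length (fst (attach G C ins))) w"
  by (auto simp: attach_size) (auto simp: attach_def intro: relabel_wire_below)

lemma attach_eval:
  assumes "\<forall>w\<in>set ins. wire_below (length G) w"
  shows "map (wire_val inp (eval_gates inp (fst (attach G C ins)))) (snd (attach G C ins))
           = circ_eval C (map (wire_val inp (eval_gates inp G)) ins)"
  using assms
  by (simp add: attach_def circ_eval_def circ_size_def eval_gates_relabel relabel_wire_val)

fun attach_all :: "gate list \<Rightarrow> (circuit \<times> wire list) list \<Rightarrow> circuit" where
  "attach_all G [] = (G, [])"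
| "attach_all G ((C, ins) # bs) =
     (let A = attach G C ins; B = attach_all (fst A) bs in (fst B, snd A @ snd B))"

definition inputs_only :: "(circuit \<times> wire list) list \<Rightarrow> bool" where
  "inputs_only bs \<longleftrightarrow> (\<forall>b\<in>set bs. \<forall>w\<in>set (snd b). wire_below 0 w)"

lemma attach_all_prefix: "\<exists>gs. fst (attach_all G bs) = G @ gs"
proof (induction G bs rule: attach_all.induct)
  case (2 G C ins bs)
  then show ?case using attach_prefix[of G C ins] by (auto simp: Let_def)
qed simp

lemma attach_all_size:
  "length (fst (attach_all G bs)) = length G + (\<Sum>b\<leftarrow>bs. circ_size (fst b))"
  by (induction G bs rule: attach_all.induct) (simp_all add: Let_def attach_size)

lemma attach_all_outputs_below:
  "inputs_only bs \<Longrightarrow> \<forall>w\<in>set (snd (attach_all G bs)). wire_below (length (fst (attach_all G bs))) w"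
proof (induction G bs rule: attach_all.induct)
  case (2 G C ins bs)
  let ?A = "attach G C ins"
  have "\<forall>w\<in>set (snd ?A). wire_below (length (fst ?A)) w"
    using "2.prems" by (intro attach_outputs_below) (auto simp: inputs_only_def intro: wire_below_mono)
  moreover have "length (fst ?A) \<le> length (fst (attach_all (fst ?A) bs))"
    by (simp add: attach_all_size)
  ultimately show ?case
    using "2.IH" "2.prems" by (auto simp: Let_def inputs_only_def intro: wire_below_mono)
qed simp

lemma attach_all_eval:
  assumes "inputs_only bs"
  shows "map (wire_val inp (eval_gates inp (fst (attach_all G bs)))) (snd (attach_all G bs))
           = concat (map (\<lambda>(C, ins). circ_eval C (map (wire_val inp []) ins)) bs)"
  using assms
proof (induction G bs rule: attach_all.induct)
  case (2 G C ins bs)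
  let ?A = "attach G C ins" and ?B = "attach_all (fst (attach G C ins)) bs"
  have ins0: "\<forall>w\<in>set ins. wire_below 0 w" and rest: "inputs_only bs"
    using "2.prems" by (auto simp: inputs_only_def)
  then have insG: "\<forall>w\<in>set ins. wire_below (length G) w" by (auto intro: wire_below_mono)
  obtain gs where gs: "fst ?B = fst ?A @ gs" using attach_all_prefix by blast
  have "map (wire_val inp (eval_gates inp (fst ?B))) (snd ?A)
          = map (wire_val inp (eval_gates inp (fst ?A))) (snd ?A)"
    unfolding gs using attach_outputs_below[OF insG] by (intro map_cong[OF refl] wire_val_prefix) auto
  also have "\<dots> = circ_eval C (map (wire_val inp (eval_gates inp G)) ins)"
    by (rule attach_eval[OF insG])
  also have "\<dots> = circ_eval C (map (wire_val inp []) ins)"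
    using ins0 by (intro arg_cong[where f="circ_eval C"] map_cong[OF refl] wire_val_below_0) auto
  finally show ?case using "2.IH"[OF refl rest] by (simp add: Let_def)
qed simp

definition compose_blocks :: "circuit \<Rightarrow> (circuit \<times> wire list) list \<Rightarrow> wire list \<Rightarrow> circuit" where
  "compose_blocks D bs extra = (let B = attach_all [] bs in attach (fst B) D (snd B @ extra))"

lemma compose_blocks_size:
  "circ_size (compose_blocks D bs extra) = circ_size D + (\<Sum>b\<leftarrow>bs. circ_size (fst b))"
  by (simp add: compose_blocks_def circ_size_def[of "attach _ _ _"] attach_size attach_all_size Let_def)

lemma compose_blocks_outputs: "length (snd (compose_blocks D bs extra)) = length (snd D)"
  by (simp add: compose_blocks_def attach_def Let_def)

lemma compose_blocks_eval:
  assumes "inputs_only bs" "\<forall>w\<in>set extra. wire_below 0 w"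
  shows "circ_eval (compose_blocks D bs extra) inp =
           circ_eval D (concat (map (\<lambda>(C, ins). circ_eval C (map (wire_val inp []) ins)) bs)
                        @ map (wire_val inp []) extra)"
proof -
  let ?B = "attach_all [] bs"
  have below: "\<forall>w\<in>set (snd ?B @ extra). wire_below (length (fst ?B)) w"
    using attach_all_outputs_below[OF assms(1)] assms(2) by (auto intro: wire_below_mono)
  have extra: "map (wire_val inp (eval_gates inp (fst ?B))) extra = map (wire_val inp []) extra"
    using assms(2) by (intro map_cong[OF refl] wire_val_below_0) auto
  have "circ_eval (compose_blocks D bs extra) inp
          = circ_eval D (map (wire_val inp (eval_gates inp (fst ?B))) (snd ?B @ extra))"
    using attach_eval[OF below, of inp D] by (simp add: compose_blocks_def circ_eval_def Let_def)
  then show ?thesis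
    by (simp only: map_append extra attach_all_eval[OF assms(1)])
qed

lemma length_concat_const: "\<forall>w\<in>set ws. length w = t \<Longrightarrow> length (concat ws) = length ws * t"
  by (induction ws) auto

lemma concat_nth_block:
  assumes "\<forall>w\<in>set ws. length w = t" "k < length ws" "i < t"
  shows "concat ws ! (k * t + i) = ws ! k ! i"
  using assms
proof (induction ws arbitrary: k)
  case (Cons w ws)
  show ?case
  proof (cases k)
    case 0
    then show ?thesis using Cons.prems by (simp add: nth_append)
  next
    case (Suc k')
    then have "concat (w # ws) ! (k * t + i) = concat ws ! (k' * t + i)"
      using Cons.prems by (simp add: nth_append algebra_simps)
    then show ?thesis using Cons Suc by simp
  qed
qed simp

definition block_inputs :: "nat \<Rightarrow> nat \<Rightarrow> wire list" where
  "block_inputs t k = map (\<lambda>i. Inp (k * t + i)) [0..<t]"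

lemma block_inputs_eval:
  assumes "\<forall>w\<in>set ws. length w = t" "k < length ws"
  shows "map (wire_val (concat ws) []) (block_inputs t k) = ws ! k"
proof (rule nth_equalityI)
  fix i assume "i < length (map (wire_val (concat ws) []) (block_inputs t k))"
  then have i: "i < t" by (simp add: block_inputs_def)
  have "k * t + i < Suc k * t" using i by simp
  also have "\<dots> \<le> length ws * t" using assms(2) by (intro mult_le_mono1) simp
  finally show "map (wire_val (concat ws) []) (block_inputs t k) ! i = ws ! k ! i"
    using i concat_nth_block[OF assms i] length_concat_const[OF assms(1)]
    by (simp add: block_inputs_def)
qed (use assms in \<open>simp add: block_inputs_def\<close>)

definition plug_extractors :: "circuit \<Rightarrow> circuit \<Rightarrow> nat \<Rightarrow> bool list list \<Rightarrow> bool list \<Rightarrow> circuit" where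
  "plug_extractors D C t \<rho>s u =
     compose_blocks D (map (\<lambda>k. (C, block_inputs t k @ map Cst (\<rho>s ! k))) [0..<length \<rho>s]) (map Cst u)"

lemma plug_extractors_size:
  "circ_size (plug_extractors D C t \<rho>s u) = circ_size D + length \<rho>s * circ_size C"
  by (simp add: plug_extractors_def compose_blocks_size comp_def sum_list_triv)

lemma plug_extractors_distinguisher:
  "distinguisher (plug_extractors D C t \<rho>s u) = distinguisher D"
  by (simp add: plug_extractors_def distinguisher_def compose_blocks_outputs)

lemma plug_extractors_eval:
  assumes C: "computes C t r h" and \<rho>s: "\<forall>\<rho>\<in>set \<rho>s. length \<rho> = r"
    and ws: "length ws = length \<rho>s" "\<forall>w\<in>set ws. length w = t"
  shows "circ_eval (plug_extractors D C t \<rho>s u) (concat ws) = circ_eval D (concat (map2 h ws \<rho>s) @ u)"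
proof -
  have block: "circ_eval C (map (wire_val (concat ws) []) (block_inputs t k @ map Cst (\<rho>s ! k)))
                 = h (ws ! k) (\<rho>s ! k)" if "k < length ws" for k
    using C \<rho>s ws that block_inputs_eval[OF ws(2) that]
    by (simp add: computes_def comp_def)
  let ?bs = "map (\<lambda>k. (C, block_inputs t k @ map Cst (\<rho>s ! k))) [0..<length \<rho>s]"
  have blocks: "map (\<lambda>(C, ins). circ_eval C (map (wire_val (concat ws) []) ins)) ?bs = map2 h ws \<rho>s"
    using ws(1) block by (intro nth_equalityI) auto
  have cst: "map (wire_val (concat ws) []) (map Cst u) = u"
    by (induction u) auto
  have inputs: "inputs_only ?bs" and constants: "\<forall>w\<in>set (map Cst u). wire_below 0 w"
    by (auto simp: inputs_only_def block_inputs_def)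
  show ?thesis
    unfolding plug_extractors_def compose_blocks_eval[OF inputs constants] blocks cst ..
qed

section \<open>Finite probability toolkit\<close>
abbreviation PR :: "'a pmf \<Rightarrow> 'a set \<Rightarrow> real" where
  "PR \<equiv> measure_pmf.prob"

abbreviation EXP :: "'a pmf \<Rightarrow> ('a \<Rightarrow> real) \<Rightarrow> real" where
  "EXP \<equiv> measure_pmf.expectation"

lemma integrable_bounded_pmf:
  fixes f :: "'a \<Rightarrow> real"
  assumes "\<And>x. \<bar>f x\<bar> \<le> B"
  shows "integrable (measure_pmf P) f"
  by (rule measure_pmf.integrable_const_bound[where B=B]) (auto simp: assms)

lemma prob_cong_supp:
  assumes "\<And>x. x \<in> set_pmf p \<Longrightarrow> x \<in> A \<longleftrightarrow> x \<in> B"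
  shows "PR p A = PR p B"
proof -
  have "A \<inter> set_pmf p = B \<inter> set_pmf p" using assms by auto
  then show ?thesis by (metis measure_Int_set_pmf)
qed

lemma expectation_cong_supp:
  fixes f g :: "'a \<Rightarrow> real"
  assumes "\<And>x. x \<in> set_pmf p \<Longrightarrow> f x = g x"
  shows "EXP p f = EXP p g"
  by (rule integral_cong_AE) (auto simp: AE_measure_pmf_iff assms)

lemma expectation_diff:
  fixes f g :: "'a \<Rightarrow> real"
  assumes "\<And>x. \<bar>f x\<bar> \<le> B" "\<And>x. \<bar>g x\<bar> \<le> B"
  shows "EXP p (\<lambda>x. f x - g x) = EXP p f - EXP p g"
  using assms by (intro Bochner_Integration.integral_diff integrable_bounded_pmf)

lemma expectation_diff_le:
  fixes f g :: "'a \<Rightarrow> real"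
  assumes "\<And>x. \<bar>f x\<bar> \<le> B" "\<And>x. \<bar>g x\<bar> \<le> B" "\<And>x. x \<in> set_pmf p \<Longrightarrow> f x - g x \<le> c"
  shows "EXP p f - EXP p g \<le> c"
proof -
  have f: "integrable (measure_pmf p) f" and g: "integrable (measure_pmf p) g"
    using assms(1,2) by (auto intro: integrable_bounded_pmf)
  have "EXP p (\<lambda>x. f x - g x) \<le> c"
    using f g assms(3) by (intro measure_pmf.integral_le_const) (auto simp: AE_measure_pmf_iff)
  then show ?thesis using f g by simp
qed

lemma abs_expectation_diff_le:
  fixes f g :: "'a \<Rightarrow> real"
  assumes "\<And>x. \<bar>f x\<bar> \<le> B" "\<And>x. \<bar>g x\<bar> \<le> B" "\<And>x. x \<in> set_pmf p \<Longrightarrow> \<bar>f x - g x\<bar> \<le> c"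
  shows "\<bar>EXP p f - EXP p g\<bar> \<le> c"
  using expectation_diff_le[of f B g p c] expectation_diff_le[of g B f p c] assms
  by (fastforce simp: abs_le_iff)

lemma abs_expectation_le:
  fixes f :: "'a \<Rightarrow> real"
  assumes "\<And>x. \<bar>f x\<bar> \<le> B"
  shows "\<bar>EXP p f\<bar> \<le> B"
proof -
  have "0 \<le> B" using abs_ge_zero order_trans assms by blast
  then show ?thesis using abs_expectation_diff_le[of f B "\<lambda>_. 0" p B] assms by simp
qed

lemma expectation_bind_pmf:
  fixes f :: "'b \<Rightarrow> real"
  assumes "\<And>x. \<bar>f x\<bar> \<le> B"
  shows "EXP (bind_pmf M N) f = EXP M (\<lambda>x. EXP (N x) f)"
  unfolding measure_pmf_bind
  by (rule integral_bind[where K="count_space UNIV" and B=B and B'=1])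
     (auto simp: assms measure_pmf_in_subprob_algebra measure_pmf.subprob_emeasure_le_1
        prob_space_imp_subprob_space intro: measure_pmf.finite_measure_axioms)

lemma expectation_pair_pmf:
  fixes f :: "'a \<times> 'b \<Rightarrow> real"
  assumes "\<And>x. \<bar>f x\<bar> \<le> B"
  shows "EXP (pair_pmf A C) f = EXP A (\<lambda>a. EXP C (\<lambda>c. f (a, c)))"
  unfolding pair_pmf_def by (simp add: expectation_bind_pmf[where B=B] assms)

lemma expectation_pair_pmf':
  fixes f :: "'a \<times> 'b \<Rightarrow> real"
  assumes "\<And>x. \<bar>f x\<bar> \<le> B"
  shows "EXP (pair_pmf A C) f = EXP C (\<lambda>c. EXP A (\<lambda>a. f (a, c)))"
proof -
  have "EXP (pair_pmf A C) f = EXP (pair_pmf C A) (\<lambda>x. f (snd x, fst x))"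
    by (subst pair_commute_pmf) (simp add: case_prod_beta)
  then show ?thesis by (simp add: expectation_pair_pmf[where B=B] assms)
qed

lemma expectation_swap:
  fixes f :: "'a \<Rightarrow> 'b \<Rightarrow> real"
  assumes "\<And>a c. \<bar>f a c\<bar> \<le> B"
  shows "EXP A (\<lambda>a. EXP C (\<lambda>c. f a c)) = EXP C (\<lambda>c. EXP A (\<lambda>a. f a c))"
  using expectation_pair_pmf[of "\<lambda>x. f (fst x) (snd x)" B A C]
    expectation_pair_pmf'[of "\<lambda>x. f (fst x) (snd x)" B A C] assms
  by simp

lemma prob_pair_pmf:
  "PR (pair_pmf A C) S = EXP A (\<lambda>a. PR C {c. (a, c) \<in> S})"
proof -
  have "PR (pair_pmf A C) S = EXP A (\<lambda>a. EXP C (\<lambda>c. indicator S (a, c) :: real))"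
    using expectation_pair_pmf[of "indicator S" 1 A C] by (simp add: indicator_def)
  also have "(\<lambda>a. EXP C (\<lambda>c. indicator S (a, c) :: real)) = (\<lambda>a. PR C {c. (a, c) \<in> S})"
  proof -
    have "(\<lambda>c. indicator S (a, c) :: real) = indicator {c. (a, c) \<in> S}" for a
      by (auto simp: indicator_def)
    then show ?thesis by simp
  qed
  finally show ?thesis .
qed

lemma prob_pair_pmf':
  "PR (pair_pmf A C) S = EXP C (\<lambda>c. PR A {a. (a, c) \<in> S})"
proof -
  have "PR (pair_pmf A C) S = PR (pair_pmf C A) ((\<lambda>(x, y). (y, x)) -` S)"
    by (subst pair_commute_pmf) simp
  then show ?thesis by (simp add: prob_pair_pmf)
qed

lemma telescope_abs:
  fixes f :: "nat \<Rightarrow> real"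
  shows "\<bar>f n - f 0\<bar> \<le> (\<Sum>j<n. \<bar>f (Suc j) - f j\<bar>)"
proof (induction n)
  case (Suc n)
  have "\<bar>f (Suc n) - f 0\<bar> \<le> \<bar>f (Suc n) - f n\<bar> + \<bar>f n - f 0\<bar>" by simp
  then show ?case using Suc by simp
qed simp

lemma markov_half:
  fixes \<Delta> :: "'a \<Rightarrow> real"
  assumes nonneg: "\<And>x. 0 \<le> \<Delta> x" and bounded: "\<And>x. \<Delta> x \<le> B" and mean: "EXP H \<Delta> \<le> e"
  shows "1/2 \<le> PR H {x. \<Delta> x \<le> 2 * e}"
proof -
  have int: "integrable (measure_pmf H) \<Delta>"
    using nonneg bounded by (intro integrable_bounded_pmf[where B=B]) (auto intro: abs_le_iff[THEN iffD2])
  have E0: "0 \<le> EXP H \<Delta>" using nonneg by (simp add: integral_nonneg_AE)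
  have "PR H {x. 2 * e < \<Delta> x} \<le> 1/2"
  proof (cases "e = 0")
    case True
    then have "AE x in measure_pmf H. \<Delta> x = 0"
      using mean E0 integral_nonneg_eq_0_iff_AE[OF int] nonneg by simp
    then have "PR H {x. 2 * e < \<Delta> x} = PR H {}"
      using True by (intro prob_cong_supp) (auto simp: AE_measure_pmf_iff)
    then show ?thesis by simp
  next
    case False
    then have e: "0 < e" using mean E0 by linarith
    have "PR H {x. 2 * e < \<Delta> x} \<le> PR H {x \<in> space (measure_pmf H). 2 * e \<le> \<Delta> x}"
      by (rule measure_pmf.finite_measure_mono) auto
    also have "\<dots> \<le> EXP H \<Delta> / (2 * e)"
      using e nonneg by (intro integral_Markov_inequality_measure[OF int, where A=UNIV]) auto
    also have "\<dots> \<le> 1/2" using e mean by (simp add: field_simps)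
    finally show ?thesis .
  qed
  moreover have "PR H {x. \<Delta> x \<le> 2 * e} = 1 - PR H {x. 2 * e < \<Delta> x}"
  proof -
    have "{x. \<Delta> x \<le> 2 * e} = UNIV - {x. 2 * e < \<Delta> x}" by auto
    then show ?thesis using measure_pmf.prob_compl[of "{x. 2 * e < \<Delta> x}" H] by simp
  qed
  ultimately show ?thesis by simp
qed

section \<open>Statistical distance\<close>

definition stat_dist :: "'a pmf \<Rightarrow> 'a pmf \<Rightarrow> real" where
  "stat_dist P Q = PR P {x. pmf Q x < pmf P x} - PR Q {x. pmf Q x < pmf P x}"

lemma prob_diff_le_stat_dist:
  assumes "finite (set_pmf P)" "finite (set_pmf Q)"
  shows "PR P S - PR Q S \<le> stat_dist P Q"
proof -
  define F where "F = set_pmf P \<union> set_pmf Q"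
  have fin: "finite F" using assms by (simp add: F_def)
  have pr: "PR R A = sum (pmf R) (F \<inter> A)" if "R = P \<or> R = Q" for R A
  proof -
    have "PR R A = PR R (F \<inter> A)" by (rule prob_cong_supp) (use that in \<open>auto simp: F_def\<close>)
    then show ?thesis using fin by (simp add: measure_measure_pmf_finite)
  qed
  have "PR P S - PR Q S = (\<Sum>x\<in>F \<inter> S. pmf P x - pmf Q x)"
    by (simp add: pr sum_subtractf)
  also have "\<dots> \<le> (\<Sum>x\<in>F \<inter> S. max (pmf P x - pmf Q x) 0)"
    by (rule sum_mono) simp
  also have "\<dots> \<le> (\<Sum>x\<in>F. max (pmf P x - pmf Q x) 0)"
    using fin by (intro sum_mono2) auto
  also have "\<dots> = (\<Sum>x\<in>F \<inter> {x. pmf Q x < pmf P x}. pmf P x - pmf Q x)"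
    using fin by (intro sum.mono_neutral_cong_right) auto
  also have "\<dots> = stat_dist P Q"
    by (simp add: stat_dist_def pr sum_subtractf)
  finally show ?thesis .
qed

lemma abs_prob_diff_le_stat_dist:
  assumes "finite (set_pmf P)" "finite (set_pmf Q)"
  shows "\<bar>PR P S - PR Q S\<bar> \<le> stat_dist P Q"
proof -
  have "PR P (- S) - PR Q (- S) = PR Q S - PR P S"
    using measure_pmf.prob_compl[of S P] measure_pmf.prob_compl[of S Q]
    by (simp add: Compl_eq_Diff_UNIV)
  then show ?thesis
    using prob_diff_le_stat_dist[OF assms, of S] prob_diff_le_stat_dist[OF assms, of "- S"] by linarith
qed

lemma stat_dist_nonneg: "finite (set_pmf P) \<Longrightarrow> finite (set_pmf Q) \<Longrightarrow> 0 \<le> stat_dist P Q"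
  using prob_diff_le_stat_dist[of P Q "{}"] by simp

lemma abs_stat_dist_le_1: "\<bar>stat_dist P Q\<bar> \<le> 1"
proof -
  let ?A = "{x. pmf Q x < pmf P x}"
  have "0 \<le> PR P ?A" "PR P ?A \<le> 1" "0 \<le> PR Q ?A" "PR Q ?A \<le> 1" by simp_all
  then show ?thesis unfolding stat_dist_def by linarith
qed

section \<open>Uniform bit strings and seeds\<close>
lemma finite_bitstrings: "finite (bitstrings n)"
proof -
  have "bitstrings n = {xs. set xs \<subseteq> UNIV \<and> length xs = n}" unfolding bitstrings_def by auto
  then show ?thesis using finite_lists_length_eq[of "UNIV :: bool set" n] by simp
qed

lemma bitstrings_nonempty: "bitstrings n \<noteq> {}"
  unfolding bitstrings_def by (auto intro: exI[of _ "replicate n False"])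

lemma set_uniform_bits [simp]: "set_pmf (uniform_bits n) = bitstrings n"
  unfolding uniform_bits_def using finite_bitstrings bitstrings_nonempty by simp

lemma uniform_bits_0: "uniform_bits 0 = return_pmf []"
  unfolding uniform_bits_def bitstrings_def by (simp add: pmf_of_set_singleton[symmetric])

lemma pair_pmf_of_set:
  assumes "finite A" "A \<noteq> {}" "finite B" "B \<noteq> {}"
  shows "pair_pmf (pmf_of_set A) (pmf_of_set B) = pmf_of_set (A \<times> B)"
  by (rule pmf_eqI) (auto simp: pmf_pair assms card_cartesian_product indicator_def)

lemma uniform_bits_append:
  "uniform_bits (a + b) = map_pmf (\<lambda>(x, y). x @ y) (pair_pmf (uniform_bits a) (uniform_bits b))"
proof -
  have inj: "inj_on (\<lambda>(x, y). x @ y) (bitstrings a \<times> bitstrings b)"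
    by (auto simp: inj_on_def bitstrings_def)
  have "bitstrings (a + b) \<subseteq> (\<lambda>(x, y). x @ y) ` (bitstrings a \<times> bitstrings b)"
  proof
    fix z assume "z \<in> bitstrings (a + b)"
    then have "z = (\<lambda>(x, y). x @ y) (take a z, drop a z)"
      "(take a z, drop a z) \<in> bitstrings a \<times> bitstrings b"
      by (auto simp: bitstrings_def)
    then show "z \<in> (\<lambda>(x, y). x @ y) ` (bitstrings a \<times> bitstrings b)" by blast
  qed
  then have "(\<lambda>(x, y). x @ y) ` (bitstrings a \<times> bitstrings b) = bitstrings (a + b)"
    by (auto simp: bitstrings_def)
  then show ?thesis
    unfolding uniform_bits_def
    by (simp add: pair_pmf_of_set finite_bitstrings bitstrings_nonempty map_pmf_of_set_inj[OF inj])
qed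

definition seedset :: "nat \<Rightarrow> nat \<Rightarrow> bool list list set" where
  "seedset m r = {rs. length rs = m \<and> (\<forall>\<rho> \<in> set rs. length \<rho> = r)}"

lemma finite_seedset: "finite (seedset m r)"
proof -
  have "seedset m r = {xs. set xs \<subseteq> bitstrings r \<and> length xs = m}"
    unfolding seedset_def bitstrings_def by auto
  then show ?thesis using finite_lists_length_eq[OF finite_bitstrings] by simp
qed

lemma seedset_nonempty: "seedset m r \<noteq> {}"
  unfolding seedset_def by (auto intro!: exI[of _ "replicate m (replicate r False)"])

lemma set_uniform_seeds [simp]: "set_pmf (uniform_seeds m r) = seedset m r"
  unfolding uniform_seeds_def seedset_def[symmetric] using finite_seedset seedset_nonempty by simp

lemma uniform_seeds_0: "uniform_seeds 0 r = return_pmf []"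
proof -
  have "{rs. length rs = 0 \<and> (\<forall>\<rho> \<in> set rs. length \<rho> = r)} = {[]}" by auto
  then show ?thesis unfolding uniform_seeds_def by (metis pmf_of_set_singleton)
qed

lemma uniform_seeds_Suc:
  "uniform_seeds (Suc j) r = map_pmf (\<lambda>(rs, \<rho>). rs @ [\<rho>]) (pair_pmf (uniform_seeds j r) (uniform_bits r))"
proof -
  have inj: "inj_on (\<lambda>(rs, \<rho>). rs @ [\<rho>]) (seedset j r \<times> bitstrings r)"
    by (auto simp: inj_on_def)
  have "seedset (Suc j) r \<subseteq> (\<lambda>(rs, \<rho>). rs @ [\<rho>]) ` (seedset j r \<times> bitstrings r)"
  proof
    fix z assume z: "z \<in> seedset (Suc j) r"
    then have "z \<noteq> []" by (auto simp: seedset_def)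
    with z have "z = (\<lambda>(rs, \<rho>). rs @ [\<rho>]) (butlast z, last z)"
      "(butlast z, last z) \<in> seedset j r \<times> bitstrings r"
      by (auto simp: seedset_def bitstrings_def dest: in_set_butlastD)
    then show "z \<in> (\<lambda>(rs, \<rho>). rs @ [\<rho>]) ` (seedset j r \<times> bitstrings r)" by blast
  qed
  then have "(\<lambda>(rs, \<rho>). rs @ [\<rho>]) ` (seedset j r \<times> bitstrings r) = seedset (Suc j) r"
    by (auto simp: bitstrings_def seedset_def)
  then show ?thesis
    unfolding uniform_seeds_def uniform_bits_def seedset_def[symmetric]
    by (simp add: pair_pmf_of_set finite_bitstrings bitstrings_nonempty finite_seedset
        seedset_nonempty map_pmf_of_set_inj[OF inj])
qed

section \<open>The hybrid argument\<close>

type_synonym ext_fun = "bool list \<Rightarrow> bool list \<Rightarrow> bool list"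

definition hybrid :: "bool list list pmf \<Rightarrow> nat \<Rightarrow> nat \<Rightarrow> nat \<Rightarrow> ext_fun \<Rightarrow> circuit \<Rightarrow> nat \<Rightarrow> real" where
  "hybrid Xs m r l h D j =
     PR (pair_pmf (pair_pmf Xs (uniform_seeds j r)) (uniform_bits ((m - j) * l)))
        {((xs, rs), u). accepts D (concat (map2 h (take j xs) rs) @ u)}"

lemma hybrid_0: "hybrid Xs m r l h D 0 = PR (uniform_bits (m * l)) {z. accepts D z}"
proof -
  have "{((xs, rs), u). accepts D (concat (map2 h (take 0 xs) rs) @ u)} = snd -` {z. accepts D z}"
    by auto
  then have "hybrid Xs m r l h D 0
      = PR (map_pmf snd (pair_pmf (pair_pmf Xs (uniform_seeds 0 r)) (uniform_bits (m * l)))) {z. accepts D z}"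
    unfolding hybrid_def by simp
  then show ?thesis by (simp add: map_snd_pair_pmf)
qed

lemma hybrid_m:
  assumes "\<forall>xs\<in>set_pmf Xs. length xs = m"
  shows "hybrid Xs m r l h D m = PR (extracted h Xs m r) {z. accepts D z}"
proof -
  have "hybrid Xs m r l h D m
          = PR (pair_pmf Xs (uniform_seeds m r)) {(xs, rs). accepts D (concat (map2 h (take m xs) rs))}"
    by (simp add: hybrid_def prob_pair_pmf' uniform_bits_0 case_prod_beta)
  also have "\<dots> = PR (pair_pmf Xs (uniform_seeds m r)) ((\<lambda>(xs, rs). concat (map2 h xs rs)) -` {z. accepts D z})"
    by (rule prob_cong_supp) (use assms in auto)
  finally show ?thesis by (simp add: extracted_def)
qed

definition split_at_block :: "nat \<Rightarrow> bool list list pmf \<Rightarrow> (bool list list \<times> bool list) pmf" where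
  "split_at_block j Xs = map_pmf (\<lambda>xs. (take j xs, xs ! j)) Xs"

definition extract_last :: "(bool list list \<times> bool list) pmf \<Rightarrow> nat \<Rightarrow> ext_fun \<Rightarrow> (bool list list \<times> bool list) pmf" where
  "extract_last P r h = map_pmf (\<lambda>(p, \<rho>). (fst p, h (snd p) \<rho>)) (pair_pmf P (uniform_bits r))"

definition uniform_last :: "(bool list list \<times> bool list) pmf \<Rightarrow> nat \<Rightarrow> (bool list list \<times> bool list) pmf" where
  "uniform_last P l = pair_pmf (map_pmf fst P) (uniform_bits l)"

lemma prob_extract_last:
  "PR (extract_last P r h) A = EXP (uniform_bits r) (\<lambda>\<rho>. PR P {p. (fst p, h (snd p) \<rho>) \<in> A})"
  by (simp add: extract_last_def prob_pair_pmf' case_prod_beta vimage_def)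

text \<open>Both
  hybrid j + 1 and hybrid j are completion rates of a distribution of pairs.\<close>
definition accept_set :: "circuit \<Rightarrow> ext_fun \<Rightarrow> bool list list \<Rightarrow> bool list \<Rightarrow> (bool list list \<times> bool list) set" where
  "accept_set D h rs u = {(v, w). accepts D (concat (map2 h v rs) @ w @ u)}"

definition completion_rate ::
  "circuit \<Rightarrow> ext_fun \<Rightarrow> nat \<Rightarrow> nat \<Rightarrow> nat \<Rightarrow> nat \<Rightarrow> (bool list list \<times> bool list) pmf \<Rightarrow> real" where
  "completion_rate D h m r l j P =
     EXP (uniform_bits ((m - Suc j) * l)) (\<lambda>u. EXP (uniform_seeds j r) (\<lambda>rs. PR P (accept_set D h rs u)))"

lemma completion_rate_diff:
  assumes "\<And>u rs. rs \<in> seedset j r \<Longrightarrow> \<bar>PR P (accept_set D h rs u) - PR Q (accept_set D h rs u)\<bar> \<le> c"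
  shows "\<bar>completion_rate D h m r l j P - completion_rate D h m r l j Q\<bar> \<le> c"
  unfolding completion_rate_def
  by (intro abs_expectation_diff_le[where B=1] abs_expectation_le[where B=1]) (simp_all add: assms)

lemma hybrid_Suc:
  assumes "j < m" "\<forall>xs\<in>set_pmf Xs. length xs = m"
  shows "hybrid Xs m r l h D (Suc j) = completion_rate D h m r l j (extract_last (split_at_block j Xs) r h)"
proof -
  have "hybrid Xs m r l h D (Suc j) = EXP (uniform_bits ((m - Suc j) * l)) (\<lambda>u.
          EXP (uniform_seeds (Suc j) r) (\<lambda>rs. PR Xs {xs. accepts D (concat (map2 h (take (Suc j) xs) rs) @ u)}))"
    by (simp add: hybrid_def prob_pair_pmf' case_prod_beta)
  also have "\<dots> = EXP (uniform_bits ((m - Suc j) * l)) (\<lambda>u. EXP (uniform_seeds j r) (\<lambda>rs.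
          EXP (uniform_bits r) (\<lambda>\<rho>. PR Xs {xs. accepts D (concat (map2 h (take (Suc j) xs) (rs @ [\<rho>])) @ u)})))"
    by (simp add: uniform_seeds_Suc case_prod_beta expectation_pair_pmf[where B=1])
  also have "\<dots> = EXP (uniform_bits ((m - Suc j) * l)) (\<lambda>u. EXP (uniform_seeds j r) (\<lambda>rs.
          PR (extract_last (split_at_block j Xs) r h) (accept_set D h rs u)))"
  proof (intro expectation_cong_supp)
    fix u rs assume "rs \<in> set_pmf (uniform_seeds j r)"
    then have rs: "length rs = j" by (simp add: seedset_def)
    have "take (Suc j) xs = take j xs @ [xs ! j]" if "xs \<in> set_pmf Xs" for xs
      using that assms by (simp add: take_Suc_conv_app_nth)
    then have "PR Xs {xs. accepts D (concat (map2 h (take (Suc j) xs) (rs @ [\<rho>])) @ u)}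
             = PR Xs {xs. accepts D (concat (map2 h (take j xs) rs) @ h (xs ! j) \<rho> @ u)}" for \<rho>
      using rs assms by (intro prob_cong_supp) auto
    then show "EXP (uniform_bits r) (\<lambda>\<rho>. PR Xs {xs. accepts D (concat (map2 h (take (Suc j) xs) (rs @ [\<rho>])) @ u)})
             = PR (extract_last (split_at_block j Xs) r h) (accept_set D h rs u)"
      by (simp add: prob_extract_last split_at_block_def accept_set_def vimage_def)
  qed
  finally show ?thesis by (simp add: completion_rate_def)
qed

lemma hybrid_at:
  assumes "j < m"
  shows "hybrid Xs m r l h D j = completion_rate D h m r l j (uniform_last (split_at_block j Xs) l)"
proof -
  have ml: "(m - j) * l = l + (m - Suc j) * l" using assms
    by (metis Suc_diff_Suc mult_Suc)
  have "hybrid Xs m r l h D j = EXP (uniform_bits ((m - j) * l)) (\<lambda>u.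
          PR (pair_pmf Xs (uniform_seeds j r)) {(xs, rs). accepts D (concat (map2 h (take j xs) rs) @ u)})"
    unfolding hybrid_def by (simp add: prob_pair_pmf' case_prod_beta)
  also have "\<dots> = EXP (uniform_bits ((m - Suc j) * l)) (\<lambda>u. EXP (uniform_bits l) (\<lambda>w.
          PR (pair_pmf Xs (uniform_seeds j r)) {(xs, rs). accepts D (concat (map2 h (take j xs) rs) @ w @ u)}))"
    unfolding ml uniform_bits_append
    by (simp add: case_prod_beta expectation_pair_pmf'[where B=1])
  also have "\<dots> = EXP (uniform_bits ((m - Suc j) * l)) (\<lambda>u. EXP (uniform_bits l) (\<lambda>w.
          EXP (uniform_seeds j r) (\<lambda>rs. PR Xs {xs. accepts D (concat (map2 h (take j xs) rs) @ w @ u)})))"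
    by (simp add: prob_pair_pmf' case_prod_beta)
  also have "\<dots> = EXP (uniform_bits ((m - Suc j) * l)) (\<lambda>u. EXP (uniform_seeds j r) (\<lambda>rs.
          EXP (uniform_bits l) (\<lambda>w. PR Xs {xs. accepts D (concat (map2 h (take j xs) rs) @ w @ u)})))"
    by (subst expectation_swap[where B=1]) simp_all
  also have "\<dots> = completion_rate D h m r l j (uniform_last (split_at_block j Xs) l)"
    by (simp add: completion_rate_def uniform_last_def split_at_block_def accept_set_def
        prob_pair_pmf' pmf.map_comp comp_def case_prod_beta)
  finally show ?thesis .
qed

definition block_shaped :: "nat \<Rightarrow> nat \<Rightarrow> (bool list list \<times> bool list) pmf \<Rightarrow> bool" where
  "block_shaped j t P \<longleftrightarrow>
     (\<forall>p\<in>set_pmf P. length (fst p) = j \<and> (\<forall>y\<in>set (fst p). length y = t) \<and> length (snd p) = t)"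

lemma plug_extractors_accepts:
  assumes "computes C t r h" "rs \<in> seedset j r" "length \<rho> = r"
    and "length v = j" "\<forall>y\<in>set v. length y = t" "length x = t"
  shows "accepts (plug_extractors D C t (rs @ [\<rho>]) u) (concat v @ x)
           = accepts D (concat (map2 h v rs) @ h x \<rho> @ u)"
proof -
  have "circ_eval (plug_extractors D C t (rs @ [\<rho>]) u) (concat (v @ [x]))
          = circ_eval D (concat (map2 h (v @ [x]) (rs @ [\<rho>])) @ u)"
    using assms by (intro plug_extractors_eval[OF assms(1)]) (auto simp: seedset_def)
  then show ?thesis using assms(2,4) by (simp add: accepts_def seedset_def)
qed

lemma prob_extract_last_accept:
  assumes "block_shaped j t P" "computes C t r h" "rs \<in> seedset j r"
  shows "PR (extract_last P r h) (accept_set D h rs u)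
           = EXP (uniform_bits r) (\<lambda>\<rho>. PR P {p. accepts (plug_extractors D C t (rs @ [\<rho>]) u) (concat (fst p) @ snd p)})"
  unfolding prob_extract_last
proof (intro expectation_cong_supp prob_cong_supp)
  fix \<rho> p assume "\<rho> \<in> set_pmf (uniform_bits r)" "p \<in> set_pmf P"
  then show "p \<in> {p. (fst p, h (snd p) \<rho>) \<in> accept_set D h rs u}
         \<longleftrightarrow> p \<in> {p. accepts (plug_extractors D C t (rs @ [\<rho>]) u) (concat (fst p) @ snd p)}"
    using assms plug_extractors_accepts[OF assms(2,3)]
    by (auto simp: accept_set_def block_shaped_def bitstrings_def)
qed

lemma plug_extractors_small:
  assumes D: "small_distinguisher (T - int m * T0) D"
    and C: "int (circ_size C) \<le> T0" and len: "length \<rho>s \<le> m"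
  shows "small_distinguisher T (plug_extractors D C t \<rho>s u)"
proof -
  have "int (length \<rho>s * circ_size C) \<le> int m * T0"
  proof -
    have "int (length \<rho>s) * int (circ_size C) \<le> int (length \<rho>s) * T0"
      using C by (intro mult_left_mono) auto
    also have "\<dots> \<le> int m * T0" using C len by (intro mult_right_mono) auto
    finally show ?thesis by simp
  qed
  then show ?thesis
    using D by (simp add: small_distinguisher_def plug_extractors_size plug_extractors_distinguisher)
qed

text \<open>First half of a hybrid step: replacing the real block by its high min-entropy
  substitute costs at most the indistinguishability error, because the composed
  circuit is a small distinguisher.\<close>
lemma pseudo_entropy_step:
  assumes P: "block_shaped j t P" and Q: "block_shaped j t Q"
    and indist: "\<forall>D'. small_distinguisher T D' \<longrightarrow>
       \<bar>PR P {p. accepts D' (concat (fst p) @ snd p)} - PR Q {p. accepts D' (concat (fst p) @ snd p)}\<bar> \<le> \<epsilon>"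
    and C: "computes C t r h" "int (circ_size C) \<le> T0"
    and D: "small_distinguisher (T - int m * T0) D" and j: "j < m" and rs: "rs \<in> seedset j r"
  shows "\<bar>PR (extract_last P r h) (accept_set D h rs u) - PR (extract_last Q r h) (accept_set D h rs u)\<bar> \<le> \<epsilon>"
  unfolding prob_extract_last_accept[OF P C(1) rs] prob_extract_last_accept[OF Q C(1) rs]
proof (intro abs_expectation_diff_le[where B=1])
  fix \<rho>
  have "length (rs @ [\<rho>]) \<le> m" using rs j by (simp add: seedset_def)
  then show "\<bar>PR P {p. accepts (plug_extractors D C t (rs @ [\<rho>]) u) (concat (fst p) @ snd p)}
           - PR Q {p. accepts (plug_extractors D C t (rs @ [\<rho>]) u) (concat (fst p) @ snd p)}\<bar> \<le> \<epsilon>"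
    using indist plug_extractors_small[OF D C(2)] by blast
qed simp_all

lemma finite_extract_last: "finite (set_pmf P) \<Longrightarrow> finite (set_pmf (extract_last P r h))"
  by (simp add: extract_last_def finite_bitstrings)

lemma finite_uniform_last: "finite (set_pmf P) \<Longrightarrow> finite (set_pmf (uniform_last P l))"
  by (simp add: uniform_last_def finite_bitstrings)

text \<open>One hybrid step: substitute Y for the real block (error eps), then replace the
  extracted substitute by uniform bits (error the statistical distance).\<close>
lemma hybrid_step:
  assumes j: "j < m" and Xs: "joint_bits m t Xs"
    and Y: "block_shaped j t Y" "finite (set_pmf Y)" "map_pmf fst Y = map_pmf (take j) Xs"
    and indist: "\<forall>D'. small_distinguisher T D' \<longrightarrow>
       \<bar>PR (split_at_block j Xs) {p. accepts D' (concat (fst p) @ snd p)}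
        - PR Y {p. accepts D' (concat (fst p) @ snd p)}\<bar> \<le> \<epsilon>"
    and C: "computes C t r h" "int (circ_size C) \<le> T0"
    and D: "small_distinguisher (T - int m * T0) D"
  shows "\<bar>hybrid Xs m r l h D (Suc j) - hybrid Xs m r l h D j\<bar>
           \<le> \<epsilon> + stat_dist (extract_last Y r h) (uniform_last Y l)"
proof -
  have len: "\<forall>xs\<in>set_pmf Xs. length xs = m" using Xs by (simp add: joint_bits_def)
  have split: "block_shaped j t (split_at_block j Xs)"
    using Xs j by (auto simp: block_shaped_def split_at_block_def joint_bits_def dest: in_set_takeD)
  have same_prefix: "uniform_last (split_at_block j Xs) l = uniform_last Y l"
    using Y(3) by (simp add: uniform_last_def split_at_block_def pmf.map_comp comp_def)
  have "\<bar>hybrid Xs m r l h D (Suc j) - completion_rate D h m r l j (extract_last Y r h)\<bar> \<le> \<epsilon>"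
    unfolding hybrid_Suc[OF j len]
    by (intro completion_rate_diff pseudo_entropy_step[OF split Y(1) indist C D j])
  moreover have "\<bar>completion_rate D h m r l j (extract_last Y r h) - hybrid Xs m r l h D j\<bar>
                   \<le> stat_dist (extract_last Y r h) (uniform_last Y l)"
    unfolding hybrid_at[OF j] same_prefix
    by (intro completion_rate_diff abs_prob_diff_le_stat_dist finite_extract_last finite_uniform_last Y(2))
  ultimately show ?thesis by linarith
qed

section \<open>Averaging the extractor error over the hash function\<close>

definition cond_snd :: "('a \<times> 'b) pmf \<Rightarrow> 'a \<Rightarrow> 'b pmf" where
  "cond_snd Y v = map_pmf snd (cond_pmf Y {p. fst p = v})"

lemma cond_snd_nonempty: "v \<in> set_pmf (map_pmf fst Y) \<Longrightarrow> set_pmf Y \<inter> {p. fst p = v} \<noteq> {}"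
  by auto

lemma set_cond_snd:
  "v \<in> set_pmf (map_pmf fst Y) \<Longrightarrow> set_pmf (cond_snd Y v) = {y. (v, y) \<in> set_pmf Y}"
  by (force simp: cond_snd_def set_cond_pmf[OF cond_snd_nonempty])

lemma cond_snd_decomp: "Y = bind_pmf (map_pmf fst Y) (\<lambda>v. map_pmf (Pair v) (cond_snd Y v))"
proof -
  have "bind_pmf (map_pmf fst Y) (\<lambda>v. cond_pmf Y {p. fst p = v}) = Y"
    by (rule bind_cond_pmf_cancel) (auto simp: vimage_def)
  moreover have "cond_pmf Y {p. fst p = v} = map_pmf (Pair v) (cond_snd Y v)"
    if "v \<in> set_pmf (map_pmf fst Y)" for v
  proof -
    have "map_pmf (Pair v) (cond_snd Y v) = map_pmf (\<lambda>p. (v, snd p)) (cond_pmf Y {p. fst p = v})"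
      by (simp add: cond_snd_def pmf.map_comp comp_def)
    also have "\<dots> = map_pmf id (cond_pmf Y {p. fst p = v})"
      by (rule map_pmf_cong[OF refl]) (auto simp: set_cond_pmf[OF cond_snd_nonempty[OF that]])
    finally show ?thesis by simp
  qed
  ultimately show ?thesis by (metis (no_types, lifting) bind_pmf_cong)
qed

lemma pmf_cond_snd:
  assumes v: "v \<in> set_pmf (map_pmf fst Y)"
  shows "pmf (cond_snd Y v) y = pmf Y (v, y) / pmf (map_pmf fst Y) v"
proof -
  note ne = cond_snd_nonempty[OF v]
  have "pmf (cond_snd Y v) y = PR (cond_pmf Y {p. fst p = v}) {(v, y)}"
    unfolding cond_snd_def pmf_map
    by (rule prob_cong_supp) (auto simp: set_cond_pmf[OF ne])
  also have "\<dots> = pmf Y (v, y) / PR Y {p. fst p = v}"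
    by (simp add: measure_pmf_single pmf_cond[OF ne])
  finally show ?thesis by (simp add: pmf_map vimage_def)
qed

lemma cond_snd_min_entropy:
  assumes "cond_min_entropy_ge \<alpha> Y" "v \<in> set_pmf (map_pmf fst Y)"
  shows "has_min_entropy \<alpha> (cond_snd Y v)"
  unfolding has_min_entropy_def
proof
  fix y
  have "0 < pmf (map_pmf fst Y) v" using assms(2) by (simp add: pmf_positive)
  moreover have "pmf Y (v, y) \<le> 2 powr (- \<alpha>) * pmf (map_pmf fst Y) v"
    using assms unfolding cond_min_entropy_ge_def by blast
  ultimately show "pmf (cond_snd Y v) y \<le> 2 powr (- \<alpha>)"
    by (simp add: pmf_cond_snd[OF assms(2)] divide_le_eq)
qed

lemma prob_extract_last_mixture:
  "PR (extract_last Y r h) A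
     = EXP (map_pmf fst Y) (\<lambda>v. PR (pair_pmf (cond_snd Y v) (uniform_bits r)) {(y, \<rho>). (v, h y \<rho>) \<in> A})"
proof -
  have "PR (extract_last Y r h) A = EXP Y (\<lambda>p. PR (uniform_bits r) {\<rho>. (fst p, h (snd p) \<rho>) \<in> A})"
    by (simp add: extract_last_def prob_pair_pmf case_prod_beta vimage_def)
  also have "\<dots> = EXP (map_pmf fst Y)
                    (\<lambda>v. EXP (cond_snd Y v) (\<lambda>y. PR (uniform_bits r) {\<rho>. (v, h y \<rho>) \<in> A}))"
    by (subst cond_snd_decomp) (simp add: expectation_bind_pmf[where B=1])
  finally show ?thesis by (simp add: prob_pair_pmf)
qed

lemma prob_uniform_last_mixture:
  "PR (uniform_last Y l) A = EXP (map_pmf fst Y) (\<lambda>v. PR (uniform_bits l) {w. (v, w) \<in> A})"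
  by (simp add: uniform_last_def prob_pair_pmf)

text \<open>Averaged over h, no family of events (possibly depending on h) separates
  extract_last Y from uniform_last Y by more than the extractor error: condition on
  the prefix and apply the extractor property to each conditional distribution.\<close>
lemma extractor_average:
  assumes ext: "extractor_family t r l \<alpha> \<epsilon> H"
    and Y: "\<forall>p\<in>set_pmf Y. length (snd p) = t" "cond_min_entropy_ge \<alpha> Y"
  shows "EXP H (\<lambda>h. PR (extract_last Y r h) (S h) - PR (uniform_last Y l) (S h)) \<le> \<epsilon>"
proof -
  define a where "a h v = PR (pair_pmf (cond_snd Y v) (uniform_bits r)) {(y, \<rho>). (v, h y \<rho>) \<in> S h}" for h v
  define b where "b h v = PR (uniform_bits l) {w. (v, w) \<in> S h}" for h v
  have ab: "\<bar>a h v - b h v\<bar> \<le> 2" for h v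
    using measure_pmf.prob_le_1 measure_nonneg unfolding a_def b_def abs_le_iff by (smt (verit))
  have extractor_at: "EXP H (\<lambda>h. a h v - b h v) \<le> \<epsilon>" if v: "v \<in> set_pmf (map_pmf fst Y)" for v
  proof -
    define \<Sigma> where "\<Sigma> = {(h, z). (v, z) \<in> S h}"
    have "set_pmf (cond_snd Y v) \<subseteq> bitstrings t"
      using Y(1) by (auto simp: set_cond_snd[OF v] bitstrings_def)
    then have "\<bar>PR (map_pmf (\<lambda>(h, x, \<rho>). (h, h x \<rho>)) (pair_pmf H (pair_pmf (cond_snd Y v) (uniform_bits r)))) \<Sigma>
               - PR (pair_pmf H (uniform_bits l)) \<Sigma>\<bar> \<le> \<epsilon>"
      using ext cond_snd_min_entropy[OF Y(2) v] unfolding extractor_family_def within_sd_def by blast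
    moreover have "EXP H (\<lambda>h. a h v - b h v) = EXP H (\<lambda>h. a h v) - EXP H (\<lambda>h. b h v)"
      by (intro expectation_diff[where B=1]) (simp_all add: a_def b_def)
    ultimately show ?thesis
      by (simp add: a_def b_def \<Sigma>_def prob_pair_pmf case_prod_beta vimage_def)
  qed
  have "EXP H (\<lambda>h. PR (extract_last Y r h) (S h) - PR (uniform_last Y l) (S h))
          = EXP H (\<lambda>h. EXP (map_pmf fst Y) (\<lambda>v. a h v - b h v))"
    unfolding prob_extract_last_mixture prob_uniform_last_mixture a_def b_def
    by (subst expectation_diff[where B=1]) simp_all
  also have "\<dots> = EXP (map_pmf fst Y) (\<lambda>v. EXP H (\<lambda>h. a h v - b h v))"
    by (rule expectation_swap[where B=2]) (rule ab)
  also have "\<dots> \<le> \<epsilon>"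
    using extractor_at ab
    by (intro measure_pmf.integral_le_const integrable_bounded_pmf[where B=2] abs_expectation_le)
       (auto simp: AE_measure_pmf_iff)
  finally show ?thesis .
qed

lemma extractor_average_stat_dist:
  assumes "extractor_family t r l \<alpha> \<epsilon> H"
    and "\<forall>p\<in>set_pmf Y. length (snd p) = t" "cond_min_entropy_ge \<alpha> Y"
  shows "EXP H (\<lambda>h. stat_dist (extract_last Y r h) (uniform_last Y l)) \<le> \<epsilon>"
  unfolding stat_dist_def by (rule extractor_average[OF assms])

definition entropy_witness ::
  "nat \<Rightarrow> bool list list pmf \<Rightarrow> int \<Rightarrow> real \<Rightarrow> real \<Rightarrow> nat \<Rightarrow> (bool list list \<times> bool list) pmf \<Rightarrow> bool" where
  "entropy_witness t Xs s \<epsilon> \<alpha> i Y \<longleftrightarrow>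
     map_pmf fst Y = map_pmf (take i) Xs \<and>
     (\<forall>p \<in> set_pmf Y. length (snd p) = t) \<and>
     cond_min_entropy_ge \<alpha> Y \<and>
     (\<forall>D. small_distinguisher s D \<longrightarrow>
        \<bar>PR Xs {xs. accepts D (concat (take i xs) @ xs ! i)} - PR Y {p. accepts D (concat (fst p) @ snd p)}\<bar> \<le> \<epsilon>)"

lemma cond_pseudo_min_entropy_witnesses:
  "cond_pseudo_min_entropy m t Xs s \<epsilon> \<alpha> \<longleftrightarrow> (\<forall>i<m. \<exists>Y. entropy_witness t Xs s \<epsilon> \<alpha> i Y)"
  by (simp add: cond_pseudo_min_entropy_def entropy_witness_def)

lemma finite_joint_bits:
  assumes "joint_bits m t Xs"
  shows "finite (set_pmf Xs)"
proof (rule finite_subset)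
  show "set_pmf Xs \<subseteq> {xs. set xs \<subseteq> bitstrings t \<and> length xs = m}"
    using assms by (auto simp: joint_bits_def bitstrings_def)
qed (rule finite_lists_length_eq[OF finite_bitstrings])

lemma entropy_witness_shape:
  assumes Xs: "joint_bits m t Xs" and j: "j < m" and W: "entropy_witness t Xs s \<epsilon> \<alpha> j Y"
  shows "block_shaped j t Y" and "finite (set_pmf Y)"
proof -
  have fst: "fst p \<in> take j ` set_pmf Xs" if "p \<in> set_pmf Y" for p
    using W that set_map_pmf[of fst Y] by (force simp: entropy_witness_def)
  then show "block_shaped j t Y"
    using Xs j W by (fastforce simp: block_shaped_def joint_bits_def entropy_witness_def dest: in_set_takeD)
  have "set_pmf Y \<subseteq> take j ` set_pmf Xs \<times> bitstrings t"
    using fst W by (force simp: entropy_witness_def bitstrings_def)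
  then show "finite (set_pmf Y)"
    using finite_joint_bits[OF Xs] finite_bitstrings by (auto intro: finite_subset)
qed

definition extraction_error ::
  "(nat \<Rightarrow> (bool list list \<times> bool list) pmf) \<Rightarrow> nat \<Rightarrow> nat \<Rightarrow> nat \<Rightarrow> ext_fun \<Rightarrow> real" where
  "extraction_error Y m r l h = (\<Sum>j<m. stat_dist (extract_last (Y j) r h) (uniform_last (Y j) l))"

lemma extracted_pseudorandom:
  assumes Xs: "joint_bits m t Xs" and W: "\<forall>j<m. entropy_witness t Xs T \<epsilon> \<alpha> j (Y j)"
    and C: "computes C t r h" "int (circ_size C) \<le> T0"
  shows "pseudorandom (T - int m * T0) (real m * \<epsilon> + extraction_error Y m r l h) (m * l) (extracted h Xs m r)"
  unfolding pseudorandom_def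
proof (intro allI impI)
  fix D assume D: "small_distinguisher (T - int m * T0) D"
  have step: "\<bar>hybrid Xs m r l h D (Suc j) - hybrid Xs m r l h D j\<bar>
                \<le> \<epsilon> + stat_dist (extract_last (Y j) r h) (uniform_last (Y j) l)" if j: "j < m" for j
  proof (rule hybrid_step[OF j Xs entropy_witness_shape[OF Xs j] _ _ C D])
    show "map_pmf fst (Y j) = map_pmf (take j) Xs" using W j by (simp add: entropy_witness_def)
    show "\<forall>D'. small_distinguisher T D' \<longrightarrow>
       \<bar>PR (split_at_block j Xs) {p. accepts D' (concat (fst p) @ snd p)}
        - PR (Y j) {p. accepts D' (concat (fst p) @ snd p)}\<bar> \<le> \<epsilon>"
      using W j by (simp add: entropy_witness_def split_at_block_def vimage_def)
  qed (use W j in auto)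
  have "\<bar>PR (extracted h Xs m r) {z. accepts D z} - PR (uniform_bits (m * l)) {z. accepts D z}\<bar>
          = \<bar>hybrid Xs m r l h D m - hybrid Xs m r l h D 0\<bar>"
    using Xs by (simp add: hybrid_0 hybrid_m joint_bits_def)
  also have "\<dots> \<le> (\<Sum>j<m. \<bar>hybrid Xs m r l h D (Suc j) - hybrid Xs m r l h D j\<bar>)"
    by (rule telescope_abs)
  also have "\<dots> \<le> (\<Sum>j<m. \<epsilon> + stat_dist (extract_last (Y j) r h) (uniform_last (Y j) l))"
    by (rule sum_mono) (simp add: step)
  finally show "\<bar>PR (extracted h Xs m r) {z. accepts D z} - PR (uniform_bits (m * l)) {z. accepts D z}\<bar>
      \<le> real m * \<epsilon> + extraction_error Y m r l h"
    by (simp add: sum.distrib extraction_error_def)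
qed

lemma extraction_error_bounds:
  assumes "joint_bits m t Xs" "\<forall>j<m. entropy_witness t Xs T \<epsilon> \<alpha> j (Y j)"
  shows "0 \<le> extraction_error Y m r l h" "extraction_error Y m r l h \<le> real m"
  using assms entropy_witness_shape(2)[OF assms(1)]
  by (auto simp: extraction_error_def intro!: sum_nonneg stat_dist_nonneg finite_extract_last
      finite_uniform_last order_trans[OF sum_mono[OF abs_le_D1[OF abs_stat_dist_le_1]]])

lemma extraction_error_mean:
  assumes "extractor_family t r l \<alpha> \<epsilon>2 H" "\<forall>j<m. entropy_witness t Xs T \<epsilon>1 \<alpha> j (Y j)"
  shows "EXP H (extraction_error Y m r l) \<le> real m * \<epsilon>2"
proof -
  have "EXP H (extraction_error Y m r l)
          = (\<Sum>j<m. EXP H (\<lambda>h. stat_dist (extract_last (Y j) r h) (uniform_last (Y j) l)))"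
    unfolding extraction_error_def
    by (intro Bochner_Integration.integral_sum integrable_bounded_pmf[where B=1] abs_stat_dist_le_1)
  also have "\<dots> \<le> (\<Sum>j<m. \<epsilon>2)"
    using assms(2) by (intro sum_mono extractor_average_stat_dist[OF assms(1)]) (auto simp: entropy_witness_def)
  finally show ?thesis by simp
qed

lemma pseudorandom_mono: "pseudorandom s e N Z \<Longrightarrow> e \<le> e' \<Longrightarrow> pseudorandom s e' N Z"
  unfolding pseudorandom_def by force

lemma linear_le_quadratic: "0 \<le> real m * e \<Longrightarrow> real m * e \<le> (real m)^2 * e"
proof (cases "m = 0")
  case False
  assume "0 \<le> real m * e"
  from mult_right_mono[OF _ this, of 1 "real m"] False show ?thesis
    by (simp add: power2_eq_square mult.assoc)
qed simp

theorem mainTheorem8: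
  fixes m t r l :: nat and T T0 :: int and \<epsilon>1 \<epsilon>2 \<alpha> :: real
    and Xs :: "bool list list pmf"
    and H :: "(bool list \<Rightarrow> bool list \<Rightarrow> bool list) pmf"
  assumes "joint_bits m t Xs"
    and "cond_pseudo_min_entropy m t Xs T \<epsilon>1 \<alpha>"
    and "extractor_family t r l \<alpha> \<epsilon>2 H"
    and "\<forall>h \<in> set_pmf H. \<exists>C. circ_size C \<le> T0 \<and> computes C t r h"
  shows "measure_pmf.prob H
           {h. pseudorandom (T - int m * T0) (real m * \<epsilon>1 + 2 * (real m)^2 * \<epsilon>2) (m * l)
                 (extracted h Xs m r)} \<ge> 1/2"
proof -
  obtain Y where W: "\<forall>j<m. entropy_witness t Xs T \<epsilon>1 \<alpha> j (Y j)"
    using assms(2) unfolding cond_pseudo_min_entropy_witnesses by metis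
  let ?err = "extraction_error Y m r l"
  note bounds = extraction_error_bounds[OF assms(1) W]
  note mean = extraction_error_mean[OF assms(3) W]
  have "0 \<le> real m * \<epsilon>2"
    using mean bounds(1) integral_nonneg_AE[of ?err "measure_pmf H"] by fastforce
  then have slack: "2 * (real m * \<epsilon>2) \<le> 2 * (real m)^2 * \<epsilon>2"
    using linear_le_quadratic by simp
  have good: "{h. ?err h \<le> 2 * (real m * \<epsilon>2)} \<inter> set_pmf H \<subseteq>
      {h. pseudorandom (T - int m * T0) (real m * \<epsilon>1 + 2 * (real m)^2 * \<epsilon>2) (m * l) (extracted h Xs m r)}"
  proof (intro subsetI CollectI)
    fix h assume h: "h \<in> {h. ?err h \<le> 2 * (real m * \<epsilon>2)} \<inter> set_pmf H"
    then obtain C where "computes C t r h" "int (circ_size C) \<le> T0" using assms(4) by blast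
    from extracted_pseudorandom[OF assms(1) W this]
    show "pseudorandom (T - int m * T0) (real m * \<epsilon>1 + 2 * (real m)^2 * \<epsilon>2) (m * l) (extracted h Xs m r)"
      by (rule pseudorandom_mono) (use h slack in simp)
  qed
  have "1/2 \<le> PR H {h. ?err h \<le> 2 * (real m * \<epsilon>2)}"
    by (rule markov_half[OF bounds mean])
  also have "\<dots> = PR H ({h. ?err h \<le> 2 * (real m * \<epsilon>2)} \<inter> set_pmf H)"
    by (simp add: measure_Int_set_pmf)
  also have "\<dots> \<le> PR H {h. pseudorandom (T - int m * T0) (real m * \<epsilon>1 + 2 * (real m)^2 * \<epsilon>2) (m * l)
                               (extracted h Xs m r)}"
    by (rule measure_pmf.finite_measure_mono[OF good]) simp
  finally show ?thesis .
qed

end
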